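(* Let $\gamma,\kappa_1,\kappa_2\ge 0$, $c>0$ and $0<a_1<a_2$ with $\gamma>\kappa_2$, and consider the scalar state-dependent delay differential equation $$u'(t)=-\gamma u(t)-\kappa_1 u\bigl(t-a_1-cu(t)\bigr)-\kappa_2 u\bigl(t-a_2-cu(t)\bigr).$$ Define the linear difference operator $L$ by $$Lu(s)=-\gamma u(s)-\kappa_1u(s-a_1)-\kappa_2u(s-a_2),$$ so that $$L^2u(s)=-\gamma Lu(s)-\sum_{j=1}^2\kappa_jLu(s-a_j).$$ Then for solutions $u$ lying in the (local) center or unstable manifold of the steady state $u\equiv0$, the equation can be written as the constant-delay equation $$u'(t)=Lu(t)+\sum_{i=1}^2\kappa_i\,c\,u(t)\,Lu(t-a_i)+\sum_{i,j=1}^2\kappa_i\kappa_j\,c^2\,u(t)\,u(t-a_i)\,Lu(t-a_i-a_j)-\frac12\bigl(cu(t)\bigr)^2\sum_{i=1}^2\kappa_i\,L^2u(t-a_i)+\mathcal{R}(t),$$ where the remainder satisfies $\mathcal{R}(t)=\mathcal{O}(\|u\|_5^4)$ with $\|u\|_5=\sup_{\theta\in[-5a_2,0]}|u(\theta)|$.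
   Context: The equation is the two-delay model $u'(t)=-\gamma u(t)-\kappa_1u(\alpha_1(t,u(t)))-\kappa_2u(\alpha_2(t,u(t)))$ with $\alpha_i(t,u(t))=t-a_i-c_iu(t)$, taken here with $c_1=c_2=c$. Under $\gamma>\kappa_2$ the state-dependent delays are bounded and never become advanced. Solutions on the center or unstable manifold of $u\equiv0$ are those that can be extended backward in time for all negative times while remaining near $0$. The remainder estimate $\mathcal{O}(\|u\|_5^4)$ refers to small solutions, i.e. $u$ close to the steady state $0$. *)

theory Defs
  imports "HOL-Analysis.Analysis"
begin

definition Lop :: "real \<Rightarrow> real \<Rightarrow> real \<Rightarrow> real \<Rightarrow> real \<Rightarrow> (real \<Rightarrow> real) \<Rightarrow> real \<Rightarrow> real" where
  "Lop \<gamma> \<kappa>1 \<kappa>2 a1 a2 u s = - \<gamma> * u s - \<kappa>1 * u (s - a1) - \<kappa>2 * u (s - a2)"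

definition norm5 :: "real \<Rightarrow> (real \<Rightarrow> real) \<Rightarrow> real \<Rightarrow> real" where
  "norm5 a2 u t = (SUP \<theta>\<in>{-5 * a2..0}. \<bar>u (t + \<theta>)\<bar>)"

end

theory Submission
  imports Defs
begin

(*
  Since c |u| <= a1/4, each state-dependent delay differs from the constant one by at most
  a1/4, so at time t the equation only sees the history on [t - 5 a2, t] and every quantity is
  controlled by N = norm5 a2 u t.  The equation gives |u'| <= (gamma + kappa1 + kappa2) N, so u,
  L u and L (L u) are Lipschitz with constants O(N), and u' - L u = O(N^2).  Differentiating
  the equation once more gives u'' = O(N) and u'' - L (L u) = O(N^2).  A second-order Taylor
  expansion of u (s - c u(t)) at s = t - a_i, in which u'(s) is in turn expanded through
  first-order Taylor expansions of its own delayed terms, yields every state-dependent term of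
  the equation up to O(N^4).  The hypothesis gamma > kappa2 only serves the global theory of the
  paper; this local estimate does not need it.
*)

lemma Taylor_second_order:
  fixes f f' f'' :: "real \<Rightarrow> real"
  assumes "\<And>z. \<bar>z - y\<bar> \<le> \<bar>h\<bar> \<Longrightarrow>
      (f has_real_derivative f' z) (at z) \<and> (f' has_real_derivative f'' z) (at z)"
  shows "\<exists>\<xi>. \<bar>\<xi> - y\<bar> \<le> \<bar>h\<bar> \<and> f (y - h) = f y - h * f' y + h\<^sup>2 / 2 * f'' \<xi>"
proof (cases "h = 0")
  case True
  then show ?thesis by auto
next
  case False
  define diff where "diff n = (if n = 0 then f else if n = 1 then f' else f'')" for n :: nat
  have "\<exists>\<xi>. (if y - h < y then y - h < \<xi> \<and> \<xi> < y else y < \<xi> \<and> \<xi> < y - h) \<and>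
      f (y - h) = (\<Sum>m<2. diff m y / fact m * (y - h - y) ^ m) + diff 2 \<xi> / fact 2 * (y - h - y)\<^sup>2"
  proof (rule Taylor[where a = "y - \<bar>h\<bar>" and b = "y + \<bar>h\<bar>"])
    show "\<forall>m z. m < 2 \<and> y - \<bar>h\<bar> \<le> z \<and> z \<le> y + \<bar>h\<bar> \<longrightarrow> DERIV (diff m) z :> diff (Suc m) z"
      using assms by (auto simp: diff_def less_2_cases_iff abs_le_iff)
  qed (use False in \<open>auto simp: diff_def\<close>)
  then obtain \<xi> where between: "if y - h < y then y - h < \<xi> \<and> \<xi> < y else y < \<xi> \<and> \<xi> < y - h"
      and "f (y - h) = (\<Sum>m<2. diff m y / fact m * (y - h - y) ^ m) + diff 2 \<xi> / fact 2 * (y - h - y)\<^sup>2"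
    by blast
  moreover from between have "\<bar>\<xi> - y\<bar> \<le> \<bar>h\<bar>"
    by (auto split: if_splits)
  ultimately show ?thesis
    by (intro exI[of _ \<xi>]) (simp add: diff_def numeral_2_eq_2 power2_eq_square)
qed

lemma abs_lincomb2_le:
  fixes \<kappa>1 \<kappa>2 q r Q R :: real
  assumes "0 \<le> \<kappa>1" "0 \<le> \<kappa>2" "\<bar>q\<bar> \<le> Q" "\<bar>r\<bar> \<le> R"
  shows "\<bar>\<kappa>1 * q + \<kappa>2 * r\<bar> \<le> \<kappa>1 * Q + \<kappa>2 * R"
proof -
  have "\<bar>\<kappa>1 * q + \<kappa>2 * r\<bar> \<le> \<kappa>1 * \<bar>q\<bar> + \<kappa>2 * \<bar>r\<bar>"
    using assms(1,2) abs_triangle_ineq[of "\<kappa>1 * q" "\<kappa>2 * r"] by (simp add: abs_mult)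
  also have "\<dots> \<le> \<kappa>1 * Q + \<kappa>2 * R"
    using assms by (intro add_mono mult_left_mono)
  finally show ?thesis .
qed

lemma abs_lincomb3_le:
  fixes \<gamma> \<kappa>1 \<kappa>2 p q r M :: real
  assumes "0 \<le> \<gamma>" "0 \<le> \<kappa>1" "0 \<le> \<kappa>2" "\<bar>p\<bar> \<le> M" "\<bar>q\<bar> \<le> M" "\<bar>r\<bar> \<le> M"
  shows "\<bar>\<gamma> * p + \<kappa>1 * q + \<kappa>2 * r\<bar> \<le> (\<gamma> + \<kappa>1 + \<kappa>2) * M"
proof -
  have "\<bar>\<gamma> * p + (\<kappa>1 * q + \<kappa>2 * r)\<bar> \<le> \<gamma> * \<bar>p\<bar> + \<bar>\<kappa>1 * q + \<kappa>2 * r\<bar>"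
    using assms(1) abs_triangle_ineq[of "\<gamma> * p"] by (simp add: abs_mult)
  also have "\<dots> \<le> \<gamma> * M + (\<kappa>1 * M + \<kappa>2 * M)"
    using assms by (intro add_mono mult_left_mono abs_lincomb2_le)
  finally show ?thesis by (simp add: algebra_simps)
qed

lemma abs_Lop_le:
  assumes "0 \<le> \<gamma>" "0 \<le> \<kappa>1" "0 \<le> \<kappa>2"
    and "\<bar>f s\<bar> \<le> M" "\<bar>f (s - a1)\<bar> \<le> M" "\<bar>f (s - a2)\<bar> \<le> M"
  shows "\<bar>Lop \<gamma> \<kappa>1 \<kappa>2 a1 a2 f s\<bar> \<le> (\<gamma> + \<kappa>1 + \<kappa>2) * M"
proof -
  have "\<bar>\<gamma> * (- f s) + \<kappa>1 * (- f (s - a1)) + \<kappa>2 * (- f (s - a2))\<bar> \<le> (\<gamma> + \<kappa>1 + \<kappa>2) * M"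
    using assms by (intro abs_lincomb3_le) simp_all
  then show ?thesis by (simp add: Lop_def)
qed

lemma lipschitz_on_abs_le:
  fixes f :: "real \<Rightarrow> real"
  assumes "C-lipschitz_on S f" "x \<in> S" "y \<in> S" "\<bar>x - y\<bar> \<le> d"
  shows "\<bar>f x - f y\<bar> \<le> C * d"
proof -
  have "\<bar>f x - f y\<bar> \<le> C * \<bar>x - y\<bar>"
    using lipschitz_onD[OF assms(1-3)] by (simp add: dist_real_def)
  also have "\<dots> \<le> C * d"
    using assms(4) lipschitz_on_nonneg[OF assms(1)] by (rule mult_left_mono)
  finally show ?thesis .
qed

lemma Lop_diff_eq_Lop_shift_diff:
  "Lop \<gamma> \<kappa>1 \<kappa>2 a1 a2 f x - Lop \<gamma> \<kappa>1 \<kappa>2 a1 a2 f y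
     = Lop \<gamma> \<kappa>1 \<kappa>2 a1 a2 (\<lambda>s. f s - f (s + (y - x))) x"
  by (simp add: Lop_def algebra_simps)

lemma lipschitz_on_Lop:
  assumes "0 \<le> \<gamma>" "0 \<le> \<kappa>1" "0 \<le> \<kappa>2" "0 \<le> a1" "a1 \<le> a2"
    and "C-lipschitz_on {\<alpha>..\<beta>} f"
  shows "((\<gamma> + \<kappa>1 + \<kappa>2) * C)-lipschitz_on {\<alpha> + a2..\<beta>} (Lop \<gamma> \<kappa>1 \<kappa>2 a1 a2 f)"
proof (rule lipschitz_onI)
  fix x y assume "x \<in> {\<alpha> + a2..\<beta>}" "y \<in> {\<alpha> + a2..\<beta>}"
  then have shifted: "\<bar>f (x - a) - f (x - a + (y - x))\<bar> \<le> C * \<bar>x - y\<bar>" if "0 \<le> a" "a \<le> a2" for a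
    using that lipschitz_onD[OF assms(6), of "x - a" "y - a"] by (simp add: dist_real_def)
  have "\<bar>Lop \<gamma> \<kappa>1 \<kappa>2 a1 a2 (\<lambda>s. f s - f (s + (y - x))) x\<bar> \<le> (\<gamma> + \<kappa>1 + \<kappa>2) * (C * \<bar>x - y\<bar>)"
    using assms(1-3) shifted[of 0] shifted[of a1] shifted[of a2] assms(4,5) by (intro abs_Lop_le) simp_all
  then show "dist (Lop \<gamma> \<kappa>1 \<kappa>2 a1 a2 f x) (Lop \<gamma> \<kappa>1 \<kappa>2 a1 a2 f y) \<le> (\<gamma> + \<kappa>1 + \<kappa>2) * C * dist x y"
    by (simp add: dist_real_def Lop_diff_eq_Lop_shift_diff mult.assoc)
next
  show "0 \<le> (\<gamma> + \<kappa>1 + \<kappa>2) * C"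
    using assms(1-3) lipschitz_on_nonneg[OF assms(6)] by simp
qed

locale sdde_parameters =
  fixes \<gamma> \<kappa>1 \<kappa>2 c a1 a2 \<delta> :: real
  assumes \<gamma>_nonneg: "0 \<le> \<gamma>" and \<kappa>1_nonneg: "0 \<le> \<kappa>1" and \<kappa>2_nonneg: "0 \<le> \<kappa>2"
    and c_pos: "0 < c" and a1_pos: "0 < a1" and a1_less_a2: "a1 < a2"
    and \<delta>_nonneg: "0 \<le> \<delta>" and shift_small: "c * \<delta> \<le> a1 / 4"
begin

abbreviation L :: "(real \<Rightarrow> real) \<Rightarrow> real \<Rightarrow> real" where
  "L \<equiv> Lop \<gamma> \<kappa>1 \<kappa>2 a1 a2"

definition K :: real where "K = \<gamma> + \<kappa>1 + \<kappa>2"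
definition C_du :: real where "C_du = (\<kappa>1 + \<kappa>2) * K * c"
definition C_ddu :: real where "C_ddu = K * K + K * C_du * \<delta>"
definition C_ddu_LLu :: real where "C_ddu_LLu = K * (2 * C_du + c * K * K)"
definition C_first_order :: real where "C_first_order = c * C_du + c\<^sup>2 / 2 * C_ddu"
definition C_second_order :: real where "C_second_order = c\<^sup>2 / 2 * (C_ddu_LLu + c * K * K * K)"
definition C_delay :: real where
  "C_delay = C_second_order + c * (\<kappa>1 + \<kappa>2) * C_first_order"

lemma constants_nonneg:
  "0 \<le> K" "0 \<le> C_du" "0 \<le> C_ddu" "0 \<le> C_ddu_LLu"
  "0 \<le> C_first_order" "0 \<le> C_second_order" "0 \<le> C_delay"
  using \<gamma>_nonneg \<kappa>1_nonneg \<kappa>2_nonneg c_pos \<delta>_nonneg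
  by (simp_all add: K_def C_du_def C_ddu_def C_ddu_LLu_def C_first_order_def C_second_order_def
      C_delay_def)

end

locale small_sdde_solution = sdde_parameters +
  fixes u u' :: "real \<Rightarrow> real" and T :: real
  assumes has_derivative: "\<And>x. x \<le> T \<Longrightarrow> (u has_real_derivative u' x) (at x within {..T})"
    and equation: "\<And>x. x \<le> T \<Longrightarrow> u' x = - \<gamma> * u x - \<kappa>1 * u (x - a1 - c * u x) - \<kappa>2 * u (x - a2 - c * u x)"
    and bounded: "\<And>x. x \<le> T \<Longrightarrow> \<bar>u x\<bar> \<le> \<delta>"
begin

lemma abs_shift_le_quarter:
  assumes "x \<le> T"
  shows "\<bar>c * u x\<bar> \<le> a1 / 4"
proof -
  have "\<bar>c * u x\<bar> = c * \<bar>u x\<bar>"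
    using c_pos by (simp add: abs_mult)
  also have "\<dots> \<le> c * \<delta>"
    using bounded[OF assms] c_pos by (intro mult_left_mono) auto
  also note shift_small
  finally show ?thesis .
qed

lemma equation_Lop: "x \<le> T \<Longrightarrow> u' x = Lop \<gamma> \<kappa>1 \<kappa>2 (a1 + c * u x) (a2 + c * u x) u x"
  using equation by (simp add: Lop_def algebra_simps)

lemma has_real_derivative_at: "x < T \<Longrightarrow> (u has_real_derivative u' x) (at x)"
  using has_derivative[of x] at_within_interior[of x "{..T}"] by simp

definition u'' :: "real \<Rightarrow> real" where
  "u'' x = - \<gamma> * u' x - \<kappa>1 * u' (x - a1 - c * u x) * (1 - c * u' x)
      - \<kappa>2 * u' (x - a2 - c * u x) * (1 - c * u' x)"

lemma has_real_derivative_u': "x < T \<Longrightarrow> (u' has_real_derivative u'' x) (at x)"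
proof -
  assume "x < T"
  have "\<bar>c * u x\<bar> \<le> a1 / 4"
    using abs_shift_le_quarter \<open>x < T\<close> by simp
  then have delayed: "x - a - c * u x < T" if "a1 \<le> a" for a
    using that \<open>x < T\<close> a1_pos by linarith
  have shift: "((\<lambda>x. x - a - c * u x) has_real_derivative 1 - c * u' x) (at x)" for a
    by (auto intro!: derivative_eq_intros has_real_derivative_at \<open>x < T\<close>)
  have "((\<lambda>x. - \<gamma> * u x - \<kappa>1 * u (x - a1 - c * u x) - \<kappa>2 * u (x - a2 - c * u x))
      has_real_derivative u'' x) (at x)"
    unfolding u''_def
    by (rule derivative_eq_intros has_real_derivative_at[OF \<open>x < T\<close>]
        DERIV_chain2[OF has_real_derivative_at[OF delayed] shift] | use a1_less_a2 in simp)+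
  moreover have "- \<gamma> * u y - \<kappa>1 * u (y - a1 - c * u y) - \<kappa>2 * u (y - a2 - c * u y) = u' y"
    if "y \<in> {..<T}" for y
    using that equation[of y] by simp
  ultimately show ?thesis
    using \<open>x < T\<close> has_field_derivative_transform_within_open[where S = "{..<T}"] by simp
qed

lemma u''_eq_Lop:
  "u'' x = Lop \<gamma> \<kappa>1 \<kappa>2 (a1 + c * u x) (a2 + c * u x) u' x
     + c * u' x * (\<kappa>1 * u' (x - a1 - c * u x) + \<kappa>2 * u' (x - a2 - c * u x))"
  by (simp add: u''_def Lop_def algebra_simps)

lemma Taylor_u:
  assumes "y + \<bar>h\<bar> < T"
  shows "\<exists>\<xi>. \<bar>\<xi> - y\<bar> \<le> \<bar>h\<bar> \<and> u (y - h) = u y - h * u' y + h\<^sup>2 / 2 * u'' \<xi>"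
proof (rule Taylor_second_order)
  fix z assume "\<bar>z - y\<bar> \<le> \<bar>h\<bar>"
  then have "z < T" using assms by linarith
  then show "(u has_real_derivative u' z) (at z) \<and> (u' has_real_derivative u'' z) (at z)"
    using has_real_derivative_at has_real_derivative_u' by blast
qed

context
  fixes t :: real
  assumes t_le_T: "t \<le> T"
begin

abbreviation N :: real where "N \<equiv> norm5 a2 u t"

lemma abs_u_le_norm5:
  assumes "t - 5 * a2 \<le> x" "x \<le> t"
  shows "\<bar>u x\<bar> \<le> N"
proof -
  have "bdd_above ((\<lambda>\<theta>. \<bar>u (t + \<theta>)\<bar>) ` {-5 * a2..0})"
    using bounded t_le_T by (intro bdd_aboveI[of _ \<delta>]) auto
  then have "\<bar>u (t + (x - t))\<bar> \<le> N"
    unfolding norm5_def using assms by (intro cSUP_upper) auto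
  then show ?thesis by simp
qed

lemma norm5_le_delta: "N \<le> \<delta>"
  unfolding norm5_def using a1_pos a1_less_a2 bounded t_le_T by (intro cSUP_least) auto

lemma norm5_nonneg: "0 \<le> N"
  using abs_u_le_norm5[of t] a1_pos a1_less_a2 by force

lemma c_norm5_le_quarter: "c * N \<le> a1 / 4"
proof -
  have "c * N \<le> c * \<delta>"
    using norm5_le_delta c_pos by (intro mult_left_mono) auto
  then show ?thesis
    using shift_small by simp
qed

lemma abs_shift_le: "t - 5 * a2 \<le> x \<Longrightarrow> x \<le> t \<Longrightarrow> \<bar>c * u x\<bar> \<le> c * N"
  using abs_u_le_norm5 c_pos by (simp add: abs_mult)

lemma abs_u'_le:
  assumes "t - 15/4 * a2 \<le> x" "x \<le> t"
  shows "\<bar>u' x\<bar> \<le> K * N"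
proof -
  have "\<bar>c * u x\<bar> \<le> a1 / 4"
    using abs_shift_le[of x] c_norm5_le_quarter assms a1_less_a2 a1_pos by linarith
  then have "\<bar>u (x - a)\<bar> \<le> N" if "a \<in> {0, a1 + c * u x, a2 + c * u x}" for a
    using that assms a1_pos a1_less_a2 by (intro abs_u_le_norm5) (auto simp: abs_le_iff)
  then have "\<bar>Lop \<gamma> \<kappa>1 \<kappa>2 (a1 + c * u x) (a2 + c * u x) u x\<bar> \<le> K * N"
    unfolding K_def using \<gamma>_nonneg \<kappa>1_nonneg \<kappa>2_nonneg
    by (intro abs_Lop_le) (auto dest: meta_spec[of _ 0])
  then show ?thesis
    using equation_Lop assms t_le_T by simp
qed

lemma lipschitz_u: "(K * N)-lipschitz_on {t - 15/4 * a2..t} u"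
proof (rule lipschitz_onI)
  fix x y assume "x \<in> {t - 15/4 * a2..t}" "y \<in> {t - 15/4 * a2..t}"
  moreover have "(u has_real_derivative u' z) (at z within {t - 15/4 * a2..t})"
    if "z \<in> {t - 15/4 * a2..t}" for z
    using that t_le_T by (intro DERIV_subset[OF has_derivative]) auto
  ultimately show "dist (u x) (u y) \<le> K * N * dist x y"
    using abs_u'_le
      field_differentiable_bound[where S = "{t - 15/4 * a2..t}" and f = u and f' = u' and B = "K * N"]
    by (simp add: dist_real_def)
qed (use constants_nonneg norm5_nonneg in simp)

lemma lipschitz_Lu: "(K * (K * N))-lipschitz_on {t - 11/4 * a2..t} (L u)"
  unfolding K_def
  by (rule lipschitz_on_subset[OF lipschitz_on_Lop[OF \<gamma>_nonneg \<kappa>1_nonneg \<kappa>2_nonneg _ _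
        lipschitz_u[unfolded K_def]]]) (use a1_pos a1_less_a2 in auto)

lemma lipschitz_LLu: "(K * (K * (K * N)))-lipschitz_on {t - 7/4 * a2..t} (L (L u))"
  unfolding K_def
  by (rule lipschitz_on_subset[OF lipschitz_on_Lop[OF \<gamma>_nonneg \<kappa>1_nonneg \<kappa>2_nonneg _ _
        lipschitz_Lu[unfolded K_def]]]) (use a1_pos a1_less_a2 in auto)

lemma abs_u'_minus_Lu:
  assumes "t - 5/2 * a2 \<le> x" "x \<le> t"
  shows "\<bar>u' x - L u x\<bar> \<le> C_du * N\<^sup>2"
proof -
  define h where "h = c * u x"
  have h: "\<bar>h\<bar> \<le> c * N" "\<bar>h\<bar> \<le> a1 / 4"
    unfolding h_def using abs_shift_le[of x] c_norm5_le_quarter assms a1_less_a2 a1_pos by linarith+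
  have delayed: "\<bar>u (x - a) - u (x - a - h)\<bar> \<le> K * N * (c * N)" if "a1 \<le> a" "a \<le> a2" for a
    using that assms h a1_pos by (intro lipschitz_on_abs_le[OF lipschitz_u]) (auto simp: abs_le_iff)
  have "u' x - L u x = \<kappa>1 * (u (x - a1) - u (x - a1 - h)) + \<kappa>2 * (u (x - a2) - u (x - a2 - h))"
    unfolding h_def using equation[of x] assms t_le_T by (simp add: Lop_def algebra_simps)
  also have "\<bar>\<dots>\<bar> \<le> \<kappa>1 * (K * N * (c * N)) + \<kappa>2 * (K * N * (c * N))"
    using delayed[of a1] delayed[of a2] a1_less_a2 \<kappa>1_nonneg \<kappa>2_nonneg by (intro abs_lincomb2_le) auto
  finally show ?thesis
    by (simp add: C_du_def power2_eq_square algebra_simps)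
qed

lemma abs_u''_nonlinear_part_le:
  assumes "t - 5/2 * a2 \<le> x" "x \<le> t"
  shows "\<bar>c * u' x * (\<kappa>1 * u' (x - a1 - c * u x) + \<kappa>2 * u' (x - a2 - c * u x))\<bar> \<le> K * C_du * N\<^sup>2"
proof -
  have "\<bar>c * u x\<bar> \<le> a1 / 4"
    using abs_shift_le[of x] c_norm5_le_quarter assms a1_less_a2 a1_pos by linarith
  then have du: "\<bar>u' (x - a)\<bar> \<le> K * N" if "a \<in> {0, a1 + c * u x, a2 + c * u x}" for a
    using that assms a1_pos a1_less_a2 by (intro abs_u'_le) (auto simp: abs_le_iff)
  have "\<bar>\<kappa>1 * u' (x - a1 - c * u x) + \<kappa>2 * u' (x - a2 - c * u x)\<bar> \<le> \<kappa>1 * (K * N) + \<kappa>2 * (K * N)"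
    using du[of "a1 + c * u x"] du[of "a2 + c * u x"] \<kappa>1_nonneg \<kappa>2_nonneg
    by (intro abs_lincomb2_le) (simp_all add: algebra_simps)
  with du[of 0] have "\<bar>u' x\<bar> * \<bar>\<kappa>1 * u' (x - a1 - c * u x) + \<kappa>2 * u' (x - a2 - c * u x)\<bar>
      \<le> K * N * (\<kappa>1 * (K * N) + \<kappa>2 * (K * N))"
    using constants_nonneg norm5_nonneg by (intro mult_mono) auto
  then have "c * (\<bar>u' x\<bar> * \<bar>\<kappa>1 * u' (x - a1 - c * u x) + \<kappa>2 * u' (x - a2 - c * u x)\<bar>)
      \<le> c * (K * N * (\<kappa>1 * (K * N) + \<kappa>2 * (K * N)))"
    using c_pos by (intro mult_left_mono) auto
  also have "\<dots> = K * C_du * N\<^sup>2"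
    by (simp add: C_du_def power2_eq_square algebra_simps)
  finally show ?thesis
    using c_pos by (simp add: abs_mult mult.assoc)
qed

lemma abs_u''_le:
  assumes "t - 5/2 * a2 \<le> x" "x \<le> t"
  shows "\<bar>u'' x\<bar> \<le> C_ddu * N"
proof -
  have "\<bar>c * u x\<bar> \<le> a1 / 4"
    using abs_shift_le[of x] c_norm5_le_quarter assms a1_less_a2 a1_pos by linarith
  then have "\<bar>u' (x - a)\<bar> \<le> K * N" if "a \<in> {0, a1 + c * u x, a2 + c * u x}" for a
    using that assms a1_pos a1_less_a2 by (intro abs_u'_le) (auto simp: abs_le_iff)
  then have linear_part: "\<bar>Lop \<gamma> \<kappa>1 \<kappa>2 (a1 + c * u x) (a2 + c * u x) u' x\<bar> \<le> K * (K * N)"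
    unfolding K_def using \<gamma>_nonneg \<kappa>1_nonneg \<kappa>2_nonneg
    by (intro abs_Lop_le) (auto simp flip: K_def dest: meta_spec[of _ 0])
  have "\<bar>u'' x\<bar> \<le> K * (K * N) + K * C_du * N\<^sup>2"
    unfolding u''_eq_Lop
    by (rule order_trans[OF abs_triangle_ineq add_mono[OF linear_part abs_u''_nonlinear_part_le[OF assms]]])
  also have "K * C_du * N\<^sup>2 \<le> K * C_du * \<delta> * N"
    using mult_right_mono[OF norm5_le_delta norm5_nonneg] constants_nonneg(1,2)
    by (simp add: power2_eq_square mult.assoc mult_left_mono)
  also have "K * (K * N) + K * C_du * \<delta> * N = C_ddu * N"
    by (simp add: C_ddu_def algebra_simps)
  finally show ?thesis by simp
qed

lemma abs_u''_minus_LLu: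
  assumes "t - 5/4 * a2 \<le> x" "x \<le> t"
  shows "\<bar>u'' x - L (L u) x\<bar> \<le> C_ddu_LLu * N\<^sup>2"
proof -
  define h where "h = c * u x"
  define M where "M = C_du * N\<^sup>2 + c * K * K * N\<^sup>2"
  have h: "\<bar>h\<bar> \<le> c * N" "\<bar>h\<bar> \<le> a1 / 4"
    unfolding h_def using abs_shift_le[of x] c_norm5_le_quarter assms a1_less_a2 a1_pos by linarith+
  have delayed: "\<bar>u' (x - a - h) - L u (x - a)\<bar> \<le> M" if "a1 \<le> a" "a \<le> a2" for a
  proof -
    have "\<bar>u' (x - a - h) - L u (x - a - h)\<bar> \<le> C_du * N\<^sup>2"
      using that assms h a1_pos by (intro abs_u'_minus_Lu) (auto simp: abs_le_iff)
    moreover have "\<bar>L u (x - a - h) - L u (x - a)\<bar> \<le> K * (K * N) * (c * N)"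
      using that assms h a1_pos by (intro lipschitz_on_abs_le[OF lipschitz_Lu]) (auto simp: abs_le_iff)
    ultimately show ?thesis
      unfolding M_def by (simp add: power2_eq_square algebra_simps)
  qed
  have "0 \<le> c * K * K * N\<^sup>2"
    using c_pos constants_nonneg(1) by simp
  then have "\<bar>u' x - L u x\<bar> \<le> M"
    using abs_u'_minus_Lu[OF _ assms(2)] assms a1_less_a2 unfolding M_def by linarith
  then have linear_part: "\<bar>\<gamma> * (u' x - L u x) + \<kappa>1 * (u' (x - a1 - h) - L u (x - a1))
      + \<kappa>2 * (u' (x - a2 - h) - L u (x - a2))\<bar> \<le> K * M"
    unfolding K_def using \<gamma>_nonneg \<kappa>1_nonneg \<kappa>2_nonneg delayed[of a1] delayed[of a2] a1_less_a2
    by (intro abs_lincomb3_le) auto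
  have nonlinear_part: "\<bar>c * u' x * (\<kappa>1 * u' (x - a1 - h) + \<kappa>2 * u' (x - a2 - h))\<bar> \<le> K * C_du * N\<^sup>2"
    unfolding h_def using assms a1_less_a2 by (intro abs_u''_nonlinear_part_le) auto
  have "u'' x - L (L u) x = c * u' x * (\<kappa>1 * u' (x - a1 - h) + \<kappa>2 * u' (x - a2 - h))
      - (\<gamma> * (u' x - L u x) + \<kappa>1 * (u' (x - a1 - h) - L u (x - a1))
         + \<kappa>2 * (u' (x - a2 - h) - L u (x - a2)))"
    unfolding u''_def h_def by (simp add: Lop_def[of _ _ _ _ _ "L u"] algebra_simps)
  also have "\<bar>\<dots>\<bar> \<le> K * C_du * N\<^sup>2 + K * M"
    by (rule order_trans[OF abs_triangle_ineq4 add_mono[OF nonlinear_part linear_part]])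
  also have "\<dots> = C_ddu_LLu * N\<^sup>2"
    unfolding M_def C_ddu_LLu_def by (simp add: algebra_simps)
  finally show ?thesis .
qed

lemma first_order_expansion:
  assumes "t - 9/4 * a2 \<le> y" "y \<le> t - a1 / 2" "\<bar>h\<bar> \<le> c * N"
  shows "\<bar>u (y - h) - (u y - h * L u y)\<bar> \<le> C_first_order * N ^ 3"
proof -
  have h: "\<bar>h\<bar> \<le> a1 / 4"
    using assms(3) c_norm5_le_quarter by linarith
  have "y + \<bar>h\<bar> < T"
    using h assms(2) t_le_T a1_pos by linarith
  then obtain \<xi> where \<xi>: "\<bar>\<xi> - y\<bar> \<le> \<bar>h\<bar>" "u (y - h) = u y - h * u' y + h\<^sup>2 / 2 * u'' \<xi>"
    using Taylor_u by blast
  have first: "\<bar>h * (u' y - L u y)\<bar> \<le> c * N * (C_du * N\<^sup>2)"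
    unfolding abs_mult using assms a1_pos a1_less_a2
    by (intro mult_mono abs_u'_minus_Lu) auto
  have second: "\<bar>h\<^sup>2 / 2 * u'' \<xi>\<bar> \<le> (c * N)\<^sup>2 / 2 * (C_ddu * N)"
  proof -
    have "\<bar>u'' \<xi>\<bar> \<le> C_ddu * N"
      using \<xi>(1) h assms a1_pos a1_less_a2 by (intro abs_u''_le) (auto simp: abs_le_iff)
    moreover have "h\<^sup>2 \<le> (c * N)\<^sup>2"
      using assms(3) by (metis abs_ge_zero power2_abs power_mono)
    ultimately show ?thesis
      by (simp add: abs_mult mult_mono)
  qed
  have "u (y - h) - (u y - h * L u y) = h\<^sup>2 / 2 * u'' \<xi> - h * (u' y - L u y)"
    using \<xi>(2) by (simp add: algebra_simps)
  also have "\<bar>\<dots>\<bar> \<le> (c * N)\<^sup>2 / 2 * (C_ddu * N) + c * N * (C_du * N\<^sup>2)"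
    by (rule order_trans[OF abs_triangle_ineq4 add_mono[OF second first]])
  also have "\<dots> = C_first_order * N ^ 3"
    by (simp add: C_first_order_def power2_eq_square power3_eq_cube algebra_simps)
  finally show ?thesis .
qed

lemma derivative_expansion:
  assumes "t - a2 \<le> s" "s \<le> t - a1"
  shows "\<bar>u' s - (L u s + c * u s * (\<kappa>1 * L u (s - a1) + \<kappa>2 * L u (s - a2)))\<bar>
    \<le> (\<kappa>1 + \<kappa>2) * C_first_order * N ^ 3"
proof -
  define h where "h = c * u s"
  have h: "\<bar>h\<bar> \<le> c * N"
    unfolding h_def using abs_shift_le assms a1_pos a1_less_a2 by simp
  have delayed: "\<bar>u (s - a - h) - (u (s - a) - h * L u (s - a))\<bar> \<le> C_first_order * N ^ 3"
    if "a1 \<le> a" "a \<le> a2" for a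
    using first_order_expansion[of "s - a" h] that assms h a1_pos by (simp add: diff_diff_add)
  have "u' s - (L u s + h * (\<kappa>1 * L u (s - a1) + \<kappa>2 * L u (s - a2)))
      = - (\<kappa>1 * (u (s - a1 - h) - (u (s - a1) - h * L u (s - a1)))
         + \<kappa>2 * (u (s - a2 - h) - (u (s - a2) - h * L u (s - a2))))"
    unfolding h_def using equation[of s] assms t_le_T a1_pos
    by (simp add: Lop_def[of _ _ _ _ _ u s] algebra_simps)
  also have "\<bar>\<dots>\<bar> \<le> \<kappa>1 * (C_first_order * N ^ 3) + \<kappa>2 * (C_first_order * N ^ 3)"
    unfolding abs_minus_cancel using \<kappa>1_nonneg \<kappa>2_nonneg delayed a1_less_a2
    by (intro abs_lincomb2_le) auto
  finally show ?thesis
    unfolding h_def by (simp add: algebra_simps)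
qed

lemma second_order_expansion:
  assumes "t - a2 \<le> s" "s \<le> t - a1" "\<bar>h\<bar> \<le> c * N"
  shows "\<bar>u (s - h) - (u s - h * u' s + h\<^sup>2 / 2 * L (L u) s)\<bar>
    \<le> C_second_order * N ^ 4"
proof -
  have h: "\<bar>h\<bar> \<le> a1 / 4"
    using assms(3) c_norm5_le_quarter by linarith
  have "s + \<bar>h\<bar> < T"
    using h assms(2) t_le_T a1_pos by linarith
  then obtain \<xi> where \<xi>: "\<bar>\<xi> - s\<bar> \<le> \<bar>h\<bar>" "u (s - h) = u s - h * u' s + h\<^sup>2 / 2 * u'' \<xi>"
    using Taylor_u by blast
  have "\<bar>u'' \<xi> - L (L u) \<xi>\<bar> \<le> C_ddu_LLu * N\<^sup>2"
    using \<xi>(1) h assms a1_pos a1_less_a2 by (intro abs_u''_minus_LLu) (auto simp: abs_le_iff)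
  moreover have "\<bar>L (L u) \<xi> - L (L u) s\<bar> \<le> K * (K * (K * N)) * (c * N)"
    using \<xi>(1) h assms a1_pos a1_less_a2
    by (intro lipschitz_on_abs_le[OF lipschitz_LLu]) (auto simp: abs_le_iff)
  ultimately have "\<bar>u'' \<xi> - L (L u) s\<bar> \<le> (C_ddu_LLu + c * K * K * K) * N\<^sup>2"
    by (simp add: power2_eq_square algebra_simps)
  moreover have "h\<^sup>2 \<le> (c * N)\<^sup>2"
    using assms(3) by (metis abs_ge_zero power2_abs power_mono)
  ultimately have remainder: "\<bar>h\<^sup>2 / 2 * (u'' \<xi> - L (L u) s)\<bar>
      \<le> (c * N)\<^sup>2 / 2 * ((C_ddu_LLu + c * K * K * K) * N\<^sup>2)"
    by (simp add: abs_mult mult_mono)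
  have "u (s - h) - (u s - h * u' s + h\<^sup>2 / 2 * L (L u) s) = h\<^sup>2 / 2 * (u'' \<xi> - L (L u) s)"
    using \<xi>(2) by (simp add: algebra_simps)
  also note remainder
  also have "(c * N)\<^sup>2 / 2 * ((C_ddu_LLu + c * K * K * K) * N\<^sup>2) = C_second_order * N ^ 4"
    by (simp add: C_second_order_def power2_eq_square power4_eq_xxxx algebra_simps)
  finally show ?thesis .
qed

lemma state_dependent_delay_expansion:
  assumes "a1 \<le> a" "a \<le> a2"
  shows "\<bar>u (t - a - c * u t) - (u (t - a) - c * u t * L u (t - a)
      - c * u t * (c * u (t - a)) * (\<kappa>1 * L u (t - a - a1) + \<kappa>2 * L u (t - a - a2))
      + (c * u t)\<^sup>2 / 2 * L (L u) (t - a))\<bar> \<le> C_delay * N ^ 4"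
proof -
  define s h where "s = t - a" and "h = c * u t"
  have h: "\<bar>h\<bar> \<le> c * N"
    unfolding h_def using abs_shift_le a1_pos a1_less_a2 by simp
  have s: "t - a2 \<le> s" "s \<le> t - a1"
    unfolding s_def using assms by simp_all
  have "u (s - h) - (u s - h * L u s - h * (c * u s) * (\<kappa>1 * L u (s - a1) + \<kappa>2 * L u (s - a2))
      + h\<^sup>2 / 2 * L (L u) s)
      = (u (s - h) - (u s - h * u' s + h\<^sup>2 / 2 * L (L u) s))
        - h * (u' s - (L u s + c * u s * (\<kappa>1 * L u (s - a1) + \<kappa>2 * L u (s - a2))))"
    by (simp add: algebra_simps)
  also have "\<bar>\<dots>\<bar> \<le> C_second_order * N ^ 4
      + c * N * ((\<kappa>1 + \<kappa>2) * C_first_order * N ^ 3)"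
    using second_order_expansion[OF s h] derivative_expansion[OF s] h norm5_nonneg c_pos
    by (intro order_trans[OF abs_triangle_ineq4 add_mono])
      (auto simp: abs_mult intro: mult_mono)
  also have "\<dots> = C_delay * N ^ 4"
    by (simp add: C_delay_def power4_eq_xxxx power3_eq_cube algebra_simps)
  finally show ?thesis
    unfolding s_def h_def by (simp add: algebra_simps)
qed

lemma constant_delay_form:
  "\<bar>u' t -
      ( L u t
      + (\<Sum>i\<in>{1::nat,2}. (if i = 1 then \<kappa>1 else \<kappa>2) * c * u t
             * L u (t - (if i = 1 then a1 else a2)))
      + (\<Sum>i\<in>{1::nat,2}. \<Sum>j\<in>{1::nat,2}.
             (if i = 1 then \<kappa>1 else \<kappa>2) * (if j = 1 then \<kappa>1 else \<kappa>2) * c^2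
             * u t * u (t - (if i = 1 then a1 else a2))
             * L u (t - (if i = 1 then a1 else a2) - (if j = 1 then a1 else a2)))
      - (1/2) * (c * u t)^2 * (\<Sum>i\<in>{1::nat,2}. (if i = 1 then \<kappa>1 else \<kappa>2)
             * L (L u) (t - (if i = 1 then a1 else a2)))
      )\<bar> \<le> (\<kappa>1 + \<kappa>2) * C_delay * N ^ 4"
proof -
  define G where "G a = u (t - a - c * u t) - (u (t - a) - c * u t * L u (t - a)
      - c * u t * (c * u (t - a)) * (\<kappa>1 * L u (t - a - a1) + \<kappa>2 * L u (t - a - a2))
      + (c * u t)\<^sup>2 / 2 * L (L u) (t - a))" for a
  have "\<bar>G a\<bar> \<le> C_delay * N ^ 4" if "a1 \<le> a" "a \<le> a2" for a
    unfolding G_def using that by (rule state_dependent_delay_expansion)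
  then have "\<bar>\<kappa>1 * G a1 + \<kappa>2 * G a2\<bar> \<le> \<kappa>1 * (C_delay * N ^ 4) + \<kappa>2 * (C_delay * N ^ 4)"
    using \<kappa>1_nonneg \<kappa>2_nonneg a1_less_a2 by (intro abs_lincomb2_le) auto
  moreover have "u' t - (L u t + \<kappa>1 * c * u t * L u (t - a1) + \<kappa>2 * c * u t * L u (t - a2)
      + \<kappa>1 * \<kappa>1 * c\<^sup>2 * u t * u (t - a1) * L u (t - a1 - a1)
      + \<kappa>1 * \<kappa>2 * c\<^sup>2 * u t * u (t - a1) * L u (t - a1 - a2)
      + \<kappa>2 * \<kappa>1 * c\<^sup>2 * u t * u (t - a2) * L u (t - a2 - a1)
      + \<kappa>2 * \<kappa>2 * c\<^sup>2 * u t * u (t - a2) * L u (t - a2 - a2)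
      - 1 / 2 * (c * u t)\<^sup>2 * (\<kappa>1 * L (L u) (t - a1) + \<kappa>2 * L (L u) (t - a2)))
      = - (\<kappa>1 * G a1 + \<kappa>2 * G a2)"
    unfolding G_def using equation[OF t_le_T]
    by (simp add: Lop_def[of _ _ _ _ _ u t] power2_eq_square algebra_simps)
  ultimately show ?thesis
    by (simp add: algebra_simps)
qed

end

end

theorem theorem2p1:
  fixes \<gamma> \<kappa>1 \<kappa>2 c a1 a2 :: real
  assumes "\<gamma> \<ge> 0" and "\<kappa>1 \<ge> 0" and "\<kappa>2 \<ge> 0" and "c > 0"
    and "0 < a1" and "a1 < a2" and "\<gamma> > \<kappa>2"
  defines "L \<equiv> Lop \<gamma> \<kappa>1 \<kappa>2 a1 a2"
  shows "\<exists>\<delta>>0. \<exists>C\<ge>0. \<forall>(u::real \<Rightarrow> real) (u'::real \<Rightarrow> real) (T::real).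
     (\<forall>t\<le>T. (u has_real_derivative u' t) (at t within {..T})) \<longrightarrow>
     (\<forall>t\<le>T. u' t = - \<gamma> * u t - \<kappa>1 * u (t - a1 - c * u t) - \<kappa>2 * u (t - a2 - c * u t)) \<longrightarrow>
     (\<forall>t\<le>T. \<bar>u t\<bar> \<le> \<delta>) \<longrightarrow>
     (\<forall>t\<le>T.
        \<bar>u' t -
          ( L u t
          + (\<Sum>i\<in>{1::nat,2}. (if i = 1 then \<kappa>1 else \<kappa>2) * c * u t
                 * L u (t - (if i = 1 then a1 else a2)))
          + (\<Sum>i\<in>{1::nat,2}. \<Sum>j\<in>{1::nat,2}.
                 (if i = 1 then \<kappa>1 else \<kappa>2) * (if j = 1 then \<kappa>1 else \<kappa>2) * c^2
                 * u t * u (t - (if i = 1 then a1 else a2))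
                 * L u (t - (if i = 1 then a1 else a2) - (if j = 1 then a1 else a2)))
          - (1/2) * (c * u t)^2 * (\<Sum>i\<in>{1::nat,2}. (if i = 1 then \<kappa>1 else \<kappa>2)
                 * L (L u) (t - (if i = 1 then a1 else a2)))
          )\<bar> \<le> C * (norm5 a2 u t)^4)"
proof -
  define \<delta> where "\<delta> = a1 / (4 * c)"
  interpret sdde_parameters \<gamma> \<kappa>1 \<kappa>2 c a1 a2 \<delta>
    using assms by unfold_locales (simp_all add: \<delta>_def)
  show ?thesis
  proof (rule exI[of _ \<delta>], intro conjI exI[of _ "(\<kappa>1 + \<kappa>2) * C_delay"] allI impI, goal_cases)
    case 1
    show ?case using assms by (simp add: \<delta>_def)
  next
    case 2
    show ?case using assms constants_nonneg by simp
  next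
    case (3 u u' T t)
    interpret small_sdde_solution \<gamma> \<kappa>1 \<kappa>2 c a1 a2 \<delta> u u' T
      by unfold_locales (use 3 \<delta>_nonneg shift_small in auto)
    show ?case
      unfolding L_def using constant_delay_form[OF \<open>t \<le> T\<close>] .
  qed
qed

end
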